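(* $\mathcal{F}$ is strongly $\mathfrak{c}$-algebrable: there is a set $Z=\{z_\alpha:\alpha<\mathfrak{c}\}$ of real functions on $[0,1]$ such that for every nonzero polynomial $P$ with real coefficients and no constant term and every distinct $z_{\alpha_1},\dots,z_{\alpha_n}\in Z$, the function $P(z_{\alpha_1},\dots,z_{\alpha_n})$ is nonzero, and every such function belongs to $\mathcal{F}$.
   Context: $\mathcal{F}$ is the set of real-valued functions of bounded variation on $[0,1]$ whose set of jump discontinuities is dense in $[0,1]$. Operations on functions are pointwise; $\mathfrak{c}$ is the cardinality of the continuum. *)

theory Defs
  imports "HOL-Analysis.Analysis"
begin

definition bounded_variation_on :: "real \<Rightarrow> real \<Rightarrow> (real \<Rightarrow> real) \<Rightarrow> bool" where
  "bounded_variation_on a b f \<longleftrightarrow>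
     (\<exists>B. \<forall>(n::nat) (t::nat \<Rightarrow> real).
        t 0 = a \<and> t n = b \<and> (\<forall>i<n. t i \<le> t (Suc i)) \<longrightarrow>
        (\<Sum>i<n. \<bar>f (t (Suc i)) - f (t i)\<bar>) \<le> B)"

definition jump_discontinuity :: "(real \<Rightarrow> real) \<Rightarrow> real \<Rightarrow> bool" where
  "jump_discontinuity f x \<longleftrightarrow>
     x \<in> {0..1} \<and> \<not> continuous (at x within {0..1}) f \<and>
     (0 < x \<longrightarrow> (\<exists>l. (f \<longlongrightarrow> l) (at_left x))) \<and>
     (x < 1 \<longrightarrow> (\<exists>r. (f \<longlongrightarrow> r) (at_right x)))"

definition classF :: "(real \<Rightarrow> real) set" where
  "classF = {f. bounded_variation_on 0 1 f \<and>
                {0..1} \<subseteq> closure {x. jump_discontinuity f x}}"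

text \<open>Polynomial in n variables with real coefficients: a finitely supported
  coefficient function on exponent vectors (nat \<Rightarrow> nat) whose support only
  uses variables 0..n-1.\<close>
definition is_poly :: "nat \<Rightarrow> ((nat \<Rightarrow> nat) \<Rightarrow> real) \<Rightarrow> bool" where
  "is_poly n c \<longleftrightarrow> finite {m. c m \<noteq> 0} \<and> (\<forall>m. c m \<noteq> 0 \<longrightarrow> (\<forall>i\<ge>n. m i = 0))"

definition poly_eval :: "nat \<Rightarrow> ((nat \<Rightarrow> nat) \<Rightarrow> real) \<Rightarrow> (nat \<Rightarrow> real) \<Rightarrow> real" where
  "poly_eval n c y = (\<Sum>m\<in>{m. c m \<noteq> 0}. c m * (\<Prod>i<n. y i ^ m i))"

end

theory Submission
  imports Defs "HOL-Real_Asymp.Real_Asymp"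
begin

text \<open>Enumerate \<open>\<rat>\<close> and let \<open>g x = 2 ^ -(index of x)\<close> for rational \<open>x\<close> and \<open>g x = 0\<close>
  otherwise, so that \<open>g\<close> sums to at most 2 over every finite set.  With the flat functions
  \<open>\<phi>\<^sub>r t = exp (- t powr - r)\<close> put \<open>z\<^sub>a = \<phi>\<^bsub>exp a + 1\<^esub> \<circ> g\<close>.  Since \<open>\<phi>\<^sub>r t \<le> t\<close> on \<open>[0,1]\<close> for
  \<open>r \<ge> 1\<close>, a polynomial \<open>P\<close> without constant term satisfies \<open>|P(\<phi>\<^sub>r\<^sub>1, \<dots>, \<phi>\<^sub>r\<^sub>n) t| \<le> C t\<close> there,
  hence \<open>F = P(z\<^sub>a\<^sub>1, \<dots>, z\<^sub>a\<^sub>n)\<close> has uniformly bounded sums \<open>\<Sum>x\<in>Y. |F x|\<close> over finite \<open>Y\<close>.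
  This alone yields bounded variation, and \<open>F \<rightarrow> 0\<close> at every point because the sets \<open>{|F| \<ge> \<epsilon>}\<close>
  are finite.  On the other hand \<open>P(\<phi>\<^sub>r\<^sub>1, \<dots>, \<phi>\<^sub>r\<^sub>n) t\<close> is a sum of terms
  \<open>c\<^sub>m exp (- \<Sum>\<^sub>i m\<^sub>i t powr - r\<^sub>i)\<close>; as the \<open>r\<^sub>i\<close> are distinct, the exponents of two distinct
  monomials differ by a quantity tending to \<open>+\<infinity>\<close> or \<open>-\<infinity>\<close> as \<open>t \<rightarrow> 0+\<close>, so a single term dominates
  and the sum does not vanish near \<open>0\<close>.  Rationals of small weight are dense, so \<open>F \<noteq> 0\<close> on a
  dense set, and each such point is a jump discontinuity, both one-sided limits being \<open>0\<close>.\<close>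

lemma finite_has_least_wrt:
  assumes "finite S" "S \<noteq> {}"
    and total: "\<And>a b. a \<in> S \<Longrightarrow> b \<in> S \<Longrightarrow> a \<noteq> b \<Longrightarrow> R a b \<or> R b a"
    and trans: "\<And>a b c. R a b \<Longrightarrow> R b c \<Longrightarrow> R a c"
  shows "\<exists>k\<in>S. \<forall>m\<in>S - {k}. R k m"
  using assms(1-3)
proof (induction S rule: finite_ne_induct)
  case (singleton x)
  then show ?case by auto
next
  case (insert x F)
  then obtain k where k: "k \<in> F" "\<forall>m\<in>F - {k}. R k m" by auto
  with insert have "R k x \<or> R x k" by auto
  then show ?case
  proof
    assume "R k x"
    then show ?thesis using k by auto
  next
    assume "R x k"
    then show ?thesis using k trans by (intro bexI[of _ x]) auto
  qed
qed

lemma filterlim_sum_powr_at_top: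
  fixes d r :: "'a \<Rightarrow> real"
  assumes A: "finite A" "j \<in> A" and pos: "d j > 0" "r j > 0"
    and slower: "\<And>i. i \<in> A \<Longrightarrow> i \<noteq> j \<Longrightarrow> d i \<noteq> 0 \<Longrightarrow> r i < r j"
  shows "filterlim (\<lambda>t. \<Sum>i\<in>A. d i * t powr - r i) at_top (at_right 0)"
proof -
  define h where "h t = d j + (\<Sum>i\<in>A - {j}. d i * t powr (r j - r i))" for t
  have "((\<lambda>t. d i * t powr (r j - r i)) \<longlongrightarrow> 0) (at_right 0)" if "i \<in> A - {j}" for i
  proof (cases "d i = 0")
    case False
    with that slower have "r j - r i > 0" by auto
    then have "((\<lambda>t. t powr (r j - r i)) \<longlongrightarrow> 0) (at_right 0)" by real_asymp
    then show ?thesis by (rule tendsto_mult_right_zero)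
  qed simp
  then have "(h \<longlongrightarrow> d j + 0) (at_right 0)"
    unfolding h_def by (intro tendsto_add tendsto_const tendsto_null_sum)
  moreover have "filterlim (\<lambda>t. t powr - r j) at_top (at_right 0)"
    using pos(2) by real_asymp
  ultimately have "filterlim (\<lambda>t. h t * t powr - r j) at_top (at_right 0)"
    using pos(1) by (intro filterlim_tendsto_pos_mult_at_top) auto
  moreover have "h t * t powr - r j = (\<Sum>i\<in>A. d i * t powr - r i)" for t
  proof -
    have "t powr (r j - r i) * t powr - r j = t powr - r i" for i
      by (simp add: powr_add[symmetric])
    then have "h t * t powr - r j = d j * t powr - r j + (\<Sum>i\<in>A - {j}. d i * t powr - r i)"
      by (simp add: h_def distrib_right sum_distrib_right mult.assoc)
    then show ?thesis
      by (simp add: sum.remove[OF A])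
  qed
  ultimately show ?thesis
    by simp
qed

lemma filterlim_sum_powr_at_top_or_at_bot:
  fixes d r :: "'a \<Rightarrow> real"
  assumes A: "finite A" "\<exists>i\<in>A. d i \<noteq> 0" and r: "inj_on r A" "\<And>i. i \<in> A \<Longrightarrow> r i > 0"
  shows "filterlim (\<lambda>t. \<Sum>i\<in>A. d i * t powr - r i) at_top (at_right 0) \<or>
         filterlim (\<lambda>t. \<Sum>i\<in>A. d i * t powr - r i) at_bot (at_right 0)"
proof -
  define A' where "A' = {i\<in>A. d i \<noteq> 0}"
  have A': "finite A'" "A' \<noteq> {}" using A by (auto simp: A'_def)
  then have "Max (r ` A') \<in> r ` A'" by (intro Max_in) auto
  then obtain j where j: "j \<in> A" "d j \<noteq> 0" "r j = Max (r ` A')" by (auto simp: A'_def)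
  have slower: "r i < r j" if "i \<in> A" "i \<noteq> j" "d i \<noteq> 0" for i
  proof -
    have "r i \<le> r j" unfolding j(3) using A' that by (intro Max_ge) (auto simp: A'_def)
    moreover have "r i \<noteq> r j" using r(1) that j(1) by (auto simp: inj_on_def)
    ultimately show ?thesis by simp
  qed
  show ?thesis
  proof (cases "d j > 0")
    case True
    have "filterlim (\<lambda>t. \<Sum>i\<in>A. d i * t powr - r i) at_top (at_right 0)"
      using filterlim_sum_powr_at_top[where d=d and r=r, OF A(1) j(1) True r(2)[OF j(1)] slower] .
    then show ?thesis ..
  next
    case False
    with j(2) have "- d j > 0" by simp
    have "filterlim (\<lambda>t. \<Sum>i\<in>A. - d i * t powr - r i) at_top (at_right 0)"
      using filterlim_sum_powr_at_top[where d="\<lambda>i. - d i" and r=r, OF A(1) j(1) \<open>- d j > 0\<close>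
          r(2)[OF j(1)]] slower by simp
    then have "filterlim (\<lambda>t. \<Sum>i\<in>A. d i * t powr - r i) at_bot (at_right 0)"
      by (simp add: filterlim_uminus_at_bot sum_negf)
    then show ?thesis ..
  qed
qed

lemma eventually_sum_exp_neg_nonzero:
  fixes E :: "'a \<Rightarrow> 'b \<Rightarrow> real"
  assumes S: "finite S" "k \<in> S" "c k \<noteq> 0"
    and faster: "\<And>m. m \<in> S - {k} \<Longrightarrow> filterlim (\<lambda>t. E m t - E k t) at_top F"
  shows "eventually (\<lambda>t. (\<Sum>m\<in>S. c m * exp (- E m t)) \<noteq> 0) F"
proof -
  have scaled: "(\<Sum>m\<in>S. c m * exp (- E m t)) * exp (E k t) =
      c k + (\<Sum>m\<in>S - {k}. c m * exp (- (E m t - E k t)))" for t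
    by (simp add: sum_distrib_left sum_distrib_right sum.remove[OF S(1,2)] exp_diff exp_minus
        field_simps)
  have "((\<lambda>t. c m * exp (- (E m t - E k t))) \<longlongrightarrow> 0) F" if "m \<in> S - {k}" for m
  proof -
    have "filterlim (\<lambda>t. - (E m t - E k t)) at_bot F"
      using faster[OF that] by (simp add: filterlim_uminus_at_bot)
    from filterlim_compose[OF exp_at_bot this] show ?thesis
      by (rule tendsto_mult_right_zero)
  qed
  then have "((\<lambda>t. c k + (\<Sum>m\<in>S - {k}. c m * exp (- (E m t - E k t)))) \<longlongrightarrow> c k + 0) F"
    by (intro tendsto_add tendsto_const tendsto_null_sum)
  then have "eventually (\<lambda>t. c k + (\<Sum>m\<in>S - {k}. c m * exp (- (E m t - E k t))) \<noteq> 0) F"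
    using S(3) by (intro tendsto_imp_eventually_ne) auto
  then show ?thesis
    by (rule eventually_mono) (metis scaled mult_zero_left)
qed

definition monomial_rate :: "nat \<Rightarrow> (nat \<Rightarrow> real) \<Rightarrow> (nat \<Rightarrow> nat) \<Rightarrow> real \<Rightarrow> real" where
  "monomial_rate n r m t = (\<Sum>i<n. real (m i) * t powr - r i)"

lemma filterlim_monomial_rate_diff:
  assumes "inj_on r {..<n}" "\<And>i. i < n \<Longrightarrow> r i > 0" "a \<noteq> b"
    and "\<And>i. n \<le> i \<Longrightarrow> a i = 0" "\<And>i. n \<le> i \<Longrightarrow> b i = 0"
  shows "filterlim (\<lambda>t. monomial_rate n r b t - monomial_rate n r a t) at_top (at_right 0) \<or>
         filterlim (\<lambda>t. monomial_rate n r b t - monomial_rate n r a t) at_bot (at_right 0)"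
proof -
  have "\<exists>i<n. a i \<noteq> b i"
    using assms(3-5) by (metis ext not_le)
  then have "\<exists>i\<in>{..<n}. real (b i) - real (a i) \<noteq> 0"
    by (metis lessThan_iff of_nat_eq_iff right_minus_eq)
  from filterlim_sum_powr_at_top_or_at_bot[OF _ this assms(1)] assms(2)
  show ?thesis
    by (simp add: monomial_rate_def sum_subtractf[symmetric] left_diff_distrib)
qed

lemma eventually_sum_exp_neg_monomial_rate_nonzero:
  assumes S: "finite S" "S \<noteq> {}" "\<And>m. m \<in> S \<Longrightarrow> c m \<noteq> 0"
    and supp: "\<And>m i. m \<in> S \<Longrightarrow> n \<le> i \<Longrightarrow> m i = 0"
    and r: "inj_on r {..<n}" "\<And>i. i < n \<Longrightarrow> r i > 0"
  shows "eventually (\<lambda>t. (\<Sum>m\<in>S. c m * exp (- monomial_rate n r m t)) \<noteq> 0) (at_right 0)"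
proof -
  define dominates where "dominates a b \<longleftrightarrow>
    filterlim (\<lambda>t. monomial_rate n r b t - monomial_rate n r a t) at_top (at_right 0)" for a b
  have "\<exists>k\<in>S. \<forall>m\<in>S - {k}. dominates k m"
  proof (rule finite_has_least_wrt[OF S(1,2)])
    fix a b assume "a \<in> S" "b \<in> S" "a \<noteq> b"
    then show "dominates a b \<or> dominates b a"
      using filterlim_monomial_rate_diff[OF r \<open>a \<noteq> b\<close>] supp
      by (simp add: dominates_def filterlim_uminus_at_bot)
  next
    fix a b c assume "dominates a b" "dominates b c"
    from filterlim_at_top_add_at_top[OF this(2,1)[unfolded dominates_def]] show "dominates a c"
      by (simp add: dominates_def)
  qed
  then obtain k where "k \<in> S" "\<forall>m\<in>S - {k}. dominates k m" by blast
  then show ?thesis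
    using S by (intro eventually_sum_exp_neg_nonzero[of S k]) (auto simp: dominates_def)
qed

lemma finite_abs_ge_if_sums_bounded:
  fixes F :: "'a \<Rightarrow> real"
  assumes sums: "\<And>Y. finite Y \<Longrightarrow> (\<Sum>x\<in>Y. \<bar>F x\<bar>) \<le> B" and "e > 0"
  shows "finite {x. e \<le> \<bar>F x\<bar>}"
proof (rule ccontr)
  define N where "N = nat \<lceil>B / e\<rceil> + 1"
  assume "infinite {x. e \<le> \<bar>F x\<bar>}"
  then obtain Y where Y: "finite Y" "card Y = N" "Y \<subseteq> {x. e \<le> \<bar>F x\<bar>}"
    using infinite_arbitrarily_large by blast
  have "real N * e \<le> (\<Sum>x\<in>Y. \<bar>F x\<bar>)"
    using Y by (metis (mono_tags) mem_Collect_eq subsetD sum_bounded_below)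
  also have "\<dots> \<le> B" by (rule sums[OF Y(1)])
  finally have "real N * e \<le> B" .
  moreover have "B < real N * e"
    using real_nat_ceiling_ge[of "B / e"] \<open>e > 0\<close> by (simp add: N_def field_simps)
  ultimately show False by simp
qed

definition rat_weight :: "real \<Rightarrow> real" where
  "rat_weight x = (if x \<in> \<rat> then (1/2) ^ to_nat_on \<rat> x else 0)"

lemma rat_weight_nonneg: "0 \<le> rat_weight x"
  by (simp add: rat_weight_def)

lemma rat_weight_le_one: "rat_weight x \<le> 1"
  by (simp add: rat_weight_def power_le_one)

lemma rat_weight_pos: "x \<in> \<rat> \<Longrightarrow> 0 < rat_weight x"
  by (simp add: rat_weight_def)

lemma sum_rat_weight_le:
  assumes "finite Y"
  shows "(\<Sum>x\<in>Y. rat_weight x) \<le> 2"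
proof -
  have inj: "inj_on (to_nat_on \<rat>) (Y \<inter> \<rat>)"
    by (rule inj_on_subset[OF inj_on_to_nat_on[OF countable_rat]]) blast
  have "(\<Sum>x\<in>Y. rat_weight x) = (\<Sum>x\<in>Y \<inter> \<rat>. (1/2) ^ to_nat_on \<rat> x)"
    using assms by (intro sum.mono_neutral_cong_right) (auto simp: rat_weight_def)
  also have "\<dots> = (\<Sum>k\<in>to_nat_on \<rat> ` (Y \<inter> \<rat>). (1/2) ^ k)"
    by (simp add: sum.reindex[OF inj])
  also have "\<dots> \<le> (\<Sum>k. (1/2) ^ k)"
    using assms by (intro sum_le_suminf) auto
  also have "\<dots> = 2"
    using suminf_geometric[of "1/2::real"] by simp
  finally show ?thesis .
qed

lemma finite_rat_weight_ge: "e > 0 \<Longrightarrow> finite {x. e \<le> rat_weight x}"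
  using finite_abs_ge_if_sums_bounded[of rat_weight 2 e] sum_rat_weight_le
  by (simp add: rat_weight_nonneg)

lemma exists_rat_small_weight_between:
  assumes "a < b" "d > 0"
  shows "\<exists>x\<in>\<rat>. a < x \<and> x < b \<and> rat_weight x < d"
proof -
  define U where "U = {a<..<b} - {x. d \<le> rat_weight x}"
  have "open U"
    unfolding U_def using finite_rat_weight_ge[OF assms(2)] by (intro open_Diff finite_imp_closed) auto
  moreover have "U \<noteq> {}"
  proof
    assume "U = {}"
    then have "{a<..<b} \<subseteq> {x. d \<le> rat_weight x}" by (auto simp: U_def)
    with finite_rat_weight_ge[OF assms(2)] infinite_Ioo[OF assms(1)] show False
      using finite_subset by blast
  qed
  ultimately have "U \<inter> \<rat> \<noteq> {}"
    using open_Int_closure_eq_empty[of U \<rat>] by (simp add: Rats_closure_real)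
  then show ?thesis by (auto simp: U_def)
qed

definition flat :: "real \<Rightarrow> real \<Rightarrow> real" where
  "flat r t = (if t \<le> 0 then 0 else exp (- (t powr - r)))"

lemma flat_nonneg: "0 \<le> flat r t"
  by (simp add: flat_def)

lemma flat_le_one: "flat r t \<le> 1"
  by (simp add: flat_def)

lemma flat_le_self:
  assumes "1 \<le> r" "0 \<le> t" "t \<le> 1"
  shows "flat r t \<le> t"
proof (cases "t = 0")
  case False
  with assms have t: "0 < t" by simp
  have "1 / t = t powr - 1" using t by (simp add: powr_neg_one)
  also have "\<dots> \<le> t powr - r" using assms t by (intro powr_mono') auto
  finally have "flat r t \<le> exp (- (1 / t))" using t by (simp add: flat_def)
  also have "\<dots> = 1 / exp (1 / t)" by (simp add: exp_minus field_simps)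
  also have "\<dots> \<le> 1 / (1 + 1 / t)"
    using t by (intro divide_left_mono exp_ge_add_one_self) (auto intro!: mult_pos_pos add_pos_pos)
  also have "\<dots> \<le> t" using t by (simp add: field_simps)
  finally show ?thesis .
qed (simp add: flat_def)

lemma flat_eq_imp_eq:
  assumes "0 < t" "t < 1" "flat r t = flat s t"
  shows "r = s"
  using assms by (simp add: flat_def powr_inj)

lemma is_poly_monomial_has_variable:
  assumes "is_poly n c" "c (\<lambda>_. 0) = 0" "c m \<noteq> 0"
  shows "\<exists>j<n. m j \<noteq> 0"
proof (rule ccontr)
  assume "\<not> ?thesis"
  then have "m i = 0" for i
    using assms(1,3) by (cases "i < n") (auto simp: is_poly_def)
  then have "m = (\<lambda>_. 0)" by blast
  with assms(2,3) show False by simp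
qed

lemma prod_flat_power_le:
  fixes r :: "nat \<Rightarrow> real" and m :: "nat \<Rightarrow> nat"
  assumes "j < n" "m j \<noteq> 0" "1 \<le> r j" "0 \<le> t" "t \<le> 1"
  shows "(\<Prod>i<n. flat (r i) t ^ m i) \<le> t"
proof -
  have "(\<Prod>i<n. flat (r i) t ^ m i) =
      flat (r j) t ^ m j * (\<Prod>i\<in>{..<n} - {j}. flat (r i) t ^ m i)"
    using assms(1) by (intro prod.remove) auto
  also have "\<dots> \<le> flat (r j) t ^ m j"
    by (intro mult_left_le prod_le_1) (simp_all add: flat_nonneg flat_le_one power_le_one)
  also have "\<dots> \<le> flat (r j) t"
    using power_decreasing[of 1 "m j" "flat (r j) t"] assms(2) by (simp add: flat_nonneg flat_le_one)
  also have "\<dots> \<le> t" by (rule flat_le_self[OF assms(3-5)])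
  finally show ?thesis .
qed

lemma abs_poly_eval_flat_le:
  assumes "is_poly n c" "c (\<lambda>_. 0) = 0" "\<And>i. 1 \<le> r i" "0 \<le> t" "t \<le> 1"
  shows "\<bar>poly_eval n c (\<lambda>i. flat (r i) t)\<bar> \<le> (\<Sum>m\<in>{m. c m \<noteq> 0}. \<bar>c m\<bar>) * t"
proof -
  have "\<bar>c m * (\<Prod>i<n. flat (r i) t ^ m i)\<bar> \<le> \<bar>c m\<bar> * t" if cm: "c m \<noteq> 0" for m
  proof -
    obtain j where "j < n" "m j \<noteq> 0"
      using is_poly_monomial_has_variable[OF assms(1,2) cm] by blast
    then have "(\<Prod>i<n. flat (r i) t ^ m i) \<le> t"
      using assms(3-5) by (intro prod_flat_power_le)
    then show ?thesis
      by (simp add: abs_mult prod_nonneg flat_nonneg mult_left_mono)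
  qed
  then have "\<bar>poly_eval n c (\<lambda>i. flat (r i) t)\<bar> \<le> (\<Sum>m\<in>{m. c m \<noteq> 0}. \<bar>c m\<bar> * t)"
    unfolding poly_eval_def by (intro order.trans[OF sum_abs] sum_mono) auto
  then show ?thesis by (simp add: sum_distrib_right)
qed

lemma poly_eval_flat_eq_sum_exp:
  assumes "t > 0"
  shows "poly_eval n c (\<lambda>i. flat (r i) t) = (\<Sum>m\<in>{m. c m \<noteq> 0}. c m * exp (- monomial_rate n r m t))"
proof -
  have "(\<Prod>i<n. flat (r i) t ^ m i) = exp (- monomial_rate n r m t)" for m
    using assms by (simp add: flat_def monomial_rate_def exp_sum sum_negf[symmetric]
        exp_of_nat_mult[symmetric] mult.commute)
  then show ?thesis by (simp add: poly_eval_def)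
qed

lemma eventually_poly_eval_flat_nonzero:
  assumes "is_poly n c" "\<exists>m. c m \<noteq> 0" "inj_on r {..<n}" "\<And>i. i < n \<Longrightarrow> r i > 0"
  shows "eventually (\<lambda>t. poly_eval n c (\<lambda>i. flat (r i) t) \<noteq> 0) (at_right 0)"
proof -
  have "eventually (\<lambda>t. (\<Sum>m\<in>{m. c m \<noteq> 0}. c m * exp (- monomial_rate n r m t)) \<noteq> 0) (at_right 0)"
    using assms by (intro eventually_sum_exp_neg_monomial_rate_nonzero) (auto simp: is_poly_def)
  with eventually_at_right_less[of 0] show ?thesis
    by eventually_elim (simp add: poly_eval_flat_eq_sum_exp)
qed

lemma bounded_variation_on_if_sums_bounded:
  assumes sums: "\<And>Y. finite Y \<Longrightarrow> (\<Sum>x\<in>Y. \<bar>F x\<bar>) \<le> B"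
  shows "bounded_variation_on a b F"
  unfolding bounded_variation_on_def
proof (intro exI[of _ "2 * B"] allI impI)
  fix n :: nat and t :: "nat \<Rightarrow> real"
  assume "t 0 = a \<and> t n = b \<and> (\<forall>i<n. t i \<le> t (Suc i))"
  then have mono: "\<And>i. i \<in> {..<n} \<Longrightarrow> t i \<le> t (Suc i)" by auto
  define I where "I = {i. i < n \<and> t i \<noteq> t (Suc i)}"
  have strict: "t i < t i' \<and> t (Suc i) < t (Suc i')" if "i \<in> I" "i' \<in> I" "i < i'" for i i'
  proof -
    have "t (Suc i) \<le> t i'"
      using that by (intro lift_Suc_mono_le_ivl[where f=t and N="{..<n}", OF mono]) (auto simp: I_def)
    moreover have "t i < t (Suc i)" "t i' < t (Suc i')"
      using that mono by (auto simp: I_def order_le_neq_trans)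
    ultimately show ?thesis by linarith
  qed
  have inj: "inj_on t I" "inj_on (\<lambda>i. t (Suc i)) I"
    by (intro linorder_inj_onI'; use strict in force)+
  have "(\<Sum>i<n. \<bar>F (t (Suc i)) - F (t i)\<bar>) = (\<Sum>i\<in>I. \<bar>F (t (Suc i)) - F (t i)\<bar>)"
    by (intro sum.mono_neutral_right) (auto simp: I_def)
  also have "\<dots> \<le> (\<Sum>i\<in>I. \<bar>F (t (Suc i))\<bar> + \<bar>F (t i)\<bar>)"
    by (intro sum_mono abs_triangle_ineq4)
  also have "\<dots> = (\<Sum>y\<in>(\<lambda>i. t (Suc i)) ` I. \<bar>F y\<bar>) + (\<Sum>y\<in>t ` I. \<bar>F y\<bar>)"
    by (simp add: sum.distrib sum.reindex[OF inj(1)] sum.reindex[OF inj(2)])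
  also have "\<dots> \<le> 2 * B"
    using sums[of "t ` I"] sums[of "(\<lambda>i. t (Suc i)) ` I"] by (simp add: I_def)
  finally show "(\<Sum>i<n. \<bar>F (t (Suc i)) - F (t i)\<bar>) \<le> 2 * B" .
qed

lemma tendsto_zero_if_finite_abs_ge:
  fixes F :: "'a::t1_space \<Rightarrow> real"
  assumes "\<And>e. e > 0 \<Longrightarrow> finite {x. e \<le> \<bar>F x\<bar>}"
  shows "(F \<longlongrightarrow> 0) (at x)"
proof (rule tendstoI)
  fix e :: real assume "e > 0"
  then have "\<not> x islimpt {y. e \<le> \<bar>F y\<bar>}"
    using assms islimpt_finite by blast
  then have "eventually (\<lambda>y. y \<notin> {y. e \<le> \<bar>F y\<bar>}) (at x)"
    by (simp add: islimpt_iff_eventually)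
  then show "eventually (\<lambda>y. dist (F y) 0 < e) (at x)"
    by eventually_elim auto
qed

lemma jump_discontinuity_if_tendsto_zero:
  assumes x: "x \<in> {0..1}" and "F x \<noteq> 0" and lim: "(F \<longlongrightarrow> 0) (at x)"
  shows "jump_discontinuity F x"
  unfolding jump_discontinuity_def
proof (intro conjI impI)
  show "\<exists>l. (F \<longlongrightarrow> l) (at_left x)" "\<exists>l. (F \<longlongrightarrow> l) (at_right x)"
    using lim by (auto simp: filterlim_at_split)
  have "at x within {0..1} \<noteq> bot"
    using x by (simp add: trivial_limit_within)
  moreover have "(F \<longlongrightarrow> 0) (at x within {0..1})"
    using lim by (rule tendsto_within_subset) simp
  ultimately show "\<not> continuous (at x within {0..1}) F"
    using \<open>F x \<noteq> 0\<close> tendsto_unique by (fastforce simp: continuous_within)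
qed (rule x)

lemma in_classF_if_sums_bounded_and_dense_support:
  assumes sums: "\<And>Y. finite Y \<Longrightarrow> (\<Sum>x\<in>Y. \<bar>F x\<bar>) \<le> B"
    and dense: "\<And>a b. a < b \<Longrightarrow> \<exists>x. a < x \<and> x < b \<and> F x \<noteq> 0"
  shows "F \<in> classF"
  unfolding classF_def
proof (intro CollectI conjI subsetI)
  show "bounded_variation_on 0 1 F"
    by (rule bounded_variation_on_if_sums_bounded[OF sums])
  have lim: "(F \<longlongrightarrow> 0) (at x)" for x
    by (intro tendsto_zero_if_finite_abs_ge finite_abs_ge_if_sums_bounded[OF sums])
  fix y :: real assume y: "y \<in> {0..1}"
  show "y \<in> closure {x. jump_discontinuity F x}"
    unfolding closure_approachable
  proof (intro allI impI)
    fix e :: real assume "e > 0"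
    then have "max 0 (y - e) < min 1 (y + e)" using y by auto
    then obtain x where x: "max 0 (y - e) < x" "x < min 1 (y + e)" "F x \<noteq> 0"
      using dense by blast
    then have "jump_discontinuity F x"
      by (intro jump_discontinuity_if_tendsto_zero lim) auto
    with x show "\<exists>x\<in>{x. jump_discontinuity F x}. dist x y < e"
      by (auto simp: dist_real_def)
  qed
qed

lemma sum_abs_poly_eval_flat_rat_weight_le:
  assumes "is_poly n c" "c (\<lambda>_. 0) = 0" "\<And>i. 1 \<le> r i" "finite Y"
  shows "(\<Sum>x\<in>Y. \<bar>poly_eval n c (\<lambda>i. flat (r i) (rat_weight x))\<bar>)
    \<le> 2 * (\<Sum>m\<in>{m. c m \<noteq> 0}. \<bar>c m\<bar>)"
proof -
  define C where "C = (\<Sum>m\<in>{m. c m \<noteq> 0}. \<bar>c m\<bar>)"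
  have "(\<Sum>x\<in>Y. \<bar>poly_eval n c (\<lambda>i. flat (r i) (rat_weight x))\<bar>) \<le> (\<Sum>x\<in>Y. C * rat_weight x)"
    unfolding C_def using assms(1-3)
    by (intro sum_mono abs_poly_eval_flat_le rat_weight_nonneg rat_weight_le_one)
  also have "\<dots> = C * (\<Sum>x\<in>Y. rat_weight x)"
    by (simp add: sum_distrib_left)
  also have "\<dots> \<le> C * 2"
    unfolding C_def by (intro mult_left_mono sum_rat_weight_le assms(4) sum_nonneg) auto
  finally show ?thesis by (simp add: C_def mult.commute)
qed

lemma poly_eval_flat_rat_weight_dense_support:
  assumes "is_poly n c" "\<exists>m. c m \<noteq> 0" "inj_on r {..<n}" "\<And>i. i < n \<Longrightarrow> r i > 0" "a < b"
  shows "\<exists>x. a < x \<and> x < b \<and> poly_eval n c (\<lambda>i. flat (r i) (rat_weight x)) \<noteq> 0"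
proof -
  obtain d where "d > 0" and d: "\<And>t. 0 < t \<Longrightarrow> t < d \<Longrightarrow> poly_eval n c (\<lambda>i. flat (r i) t) \<noteq> 0"
    using eventually_poly_eval_flat_nonzero[OF assms(1-4)] unfolding eventually_at_right_field by auto
  obtain x where "x \<in> \<rat>" "a < x" "x < b" "rat_weight x < d"
    using exists_rat_small_weight_between[OF assms(5) \<open>d > 0\<close>] by blast
  then show ?thesis
    using d rat_weight_pos by blast
qed

lemma poly_eval_flat_rat_weight_in_classF:
  assumes c: "is_poly n c" "c (\<lambda>_. 0) = 0" "\<exists>m. c m \<noteq> 0"
    and r: "inj_on r {..<n}" "\<And>i. 1 \<le> r i"
  shows "(\<exists>x\<in>{0..1}. poly_eval n c (\<lambda>i. flat (r i) (rat_weight x)) \<noteq> 0) \<and>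
    (\<lambda>x. poly_eval n c (\<lambda>i. flat (r i) (rat_weight x))) \<in> classF"
proof
  have "r i > 0" for i using r(2)[of i] by linarith
  note dense = poly_eval_flat_rat_weight_dense_support[OF c(1,3) r(1) this]
  obtain x where "0 < x" "x < 1" "poly_eval n c (\<lambda>i. flat (r i) (rat_weight x)) \<noteq> 0"
    using dense[of 0 1] by auto
  then show "\<exists>x\<in>{0..1}. poly_eval n c (\<lambda>i. flat (r i) (rat_weight x)) \<noteq> 0"
    by (intro bexI[of _ x]) auto
  show "(\<lambda>x. poly_eval n c (\<lambda>i. flat (r i) (rat_weight x))) \<in> classF"
    using sum_abs_poly_eval_flat_rat_weight_le[OF c(1,2) r(2)] dense
    by (rule in_classF_if_sums_bounded_and_dense_support)
qed

theorem mainTheorem7: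
  shows "\<exists>z :: real \<Rightarrow> (real \<Rightarrow> real). inj z \<and>
     (\<forall>(n::nat) (\<alpha>::nat \<Rightarrow> real) (c::(nat \<Rightarrow> nat) \<Rightarrow> real).
        inj_on \<alpha> {..<n} \<and> is_poly n c \<and> c (\<lambda>_. 0) = 0 \<and> (\<exists>m. c m \<noteq> 0) \<longrightarrow>
        (\<exists>x\<in>{0..1}. poly_eval n c (\<lambda>i. z (\<alpha> i) x) \<noteq> 0) \<and>
        (\<lambda>x. poly_eval n c (\<lambda>i. z (\<alpha> i) x)) \<in> classF)"
proof -
  define z where "z a x = flat (exp a + 1) (rat_weight x)" for a x
  have "inj z"
  proof (rule injI)
    fix a b assume "z a = z b"
    obtain x where x: "x \<in> \<rat>" "rat_weight x < 1"
      using exists_rat_small_weight_between[of 0 1 1] by auto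
    have "flat (exp a + 1) (rat_weight x) = flat (exp b + 1) (rat_weight x)"
      using fun_cong[OF \<open>z a = z b\<close>, of x] by (simp add: z_def)
    from flat_eq_imp_eq[OF rat_weight_pos[OF x(1)] x(2) this] show "a = b" by simp
  qed
  moreover have "(\<exists>x\<in>{0..1}. poly_eval n c (\<lambda>i. z (\<alpha> i) x) \<noteq> 0) \<and>
      (\<lambda>x. poly_eval n c (\<lambda>i. z (\<alpha> i) x)) \<in> classF"
    if "inj_on \<alpha> {..<n}" "is_poly n c" "c (\<lambda>_. 0) = 0" "\<exists>m. c m \<noteq> 0" for n \<alpha> c
  proof -
    have "inj_on (\<lambda>i. exp (\<alpha> i) + 1) {..<n}"
      using that(1) by (simp add: inj_on_def)
    with that(2-4) show ?thesis
      unfolding z_def by (intro poly_eval_flat_rat_weight_in_classF) (auto simp: add_increasing)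
  qed
  ultimately show ?thesis by blast
qed

end
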